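(* Let $M$ be a finite message set, let $\Sigma$ be an ambiguous experiment with message set $M$, and let $\tau: M \to \Delta(A)$ be a receiver strategy with $\tau \in BR(\Sigma)$. For each $\sigma \in \Sigma$ define the canonical experiment $\sigma^{*}: \Omega \to \Delta(A)$ by $\sigma^{*}(a\mid\omega) = \sum_{m \in M} \sigma(m\mid\omega)\tau(a\mid m)$, and let $\Sigma^{*} = \{\sigma^{*} : \sigma \in \Sigma\}$. Then $\Sigma^{*}$ is a canonical ambiguous experiment (a nonempty closed convex set of canonical experiments), it is obedient, i.e. $\tau^{*} \in BR(\Sigma^{*})$, and $u_i(\sigma, \tau) = u_i(\sigma^{*}, \tau^{*})$ for all $i \in \{s, r\}$ and all $\sigma \in \Sigma$.
   Context: Setting: $\Omega$ is a finite set of states, $A$ a finite set of receiver actions. Sender and receiver share a set of priors $P \subseteq \Delta(\Omega)$, nonempty, closed and convex; both have maxmin expected utility preferences. Payoffs are $u_s, u_r : A \times \Omega \to \mathbb{R}$. A statistical experiment with finite message set $M$ is a map $\sigma: \Omega \to \Delta(M)$, written $\sigma(m\mid\omega)$. A receiver strategy is $\tau: M \to \Delta(A)$, written $\tau(a\mid m)$. For $p \in P$ and $i \in \{s,r\}$, $u_i(p,\sigma,\tau) = \sum_{\omega,m,a} p(\omega)\sigma(m\mid\omega)\tau(a\mid m)u_i(a,\omega)$ and $u_i(\sigma,\tau) = \min_{p\in P} u_i(p,\sigma,\tau)$. An ambiguous experiment is a nonempty closed convex set $\Sigma$ of statistical experiments with a common finite message set $M$; $U_i(\Sigma,\tau)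 = \min_{\sigma \in \Sigma} u_i(\sigma,\tau)$. Best responses: $BR(\sigma) = \arg\max_{\tau} u_r(\sigma,\tau)$ and $BR(\Sigma) = \arg\max_{\tau} U_r(\Sigma,\tau)$, maximizing over all strategies $\tau: M \to \Delta(A)$. An experiment is canonical if its message set is $M = A$. The obedient strategy $\tau^{*}: A \to \Delta(A)$ is $\tau^{*}(a\mid a) = 1$ for all $a \in A$. A canonical (ambiguous) experiment is obedient if $\tau^{*}$ is a best response to it. *)

theory Defs
  imports "HOL-Analysis.Analysis"
begin

text \<open>A statistical experiment is sigma :: real^'m^'w with sigma$w$m = sigma(m|w);
  a receiver strategy is tau :: real^'a^'m with tau$m$a = tau(a|m).\<close>

definition is_dist :: "real^'n \<Rightarrow> bool" where
  "is_dist p \<longleftrightarrow> (\<forall>i. 0 \<le> p $ i) \<and> (\<Sum>i\<in>UNIV. p $ i) = 1"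

definition stat_experiment :: "real^'m^'w \<Rightarrow> bool" where
  "stat_experiment \<sigma> \<longleftrightarrow> (\<forall>w. is_dist (\<sigma> $ w))"

definition strategy :: "real^'a^'m \<Rightarrow> bool" where
  "strategy \<tau> \<longleftrightarrow> (\<forall>m. is_dist (\<tau> $ m))"

definition prior_set :: "(real^'w) set \<Rightarrow> bool" where
  "prior_set P \<longleftrightarrow> P \<noteq> {} \<and> closed P \<and> convex P \<and> (\<forall>p\<in>P. is_dist p)"

definition ambiguous_experiment :: "(real^'m^'w) set \<Rightarrow> bool" where
  "ambiguous_experiment S \<longleftrightarrow> S \<noteq> {} \<and> closed S \<and> convex S \<and> (\<forall>\<sigma>\<in>S. stat_experiment \<sigma>)"

definition util_p :: "('a \<Rightarrow> 'w \<Rightarrow> real) \<Rightarrow> real^'w \<Rightarrow> real^'m^'w \<Rightarrow> real^'a^'m \<Rightarrow> real" where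
  "util_p u p \<sigma> \<tau> = (\<Sum>w\<in>UNIV. \<Sum>m\<in>UNIV. \<Sum>a\<in>UNIV. p $ w * \<sigma> $ w $ m * \<tau> $ m $ a * u a w)"

definition util :: "(real^'w) set \<Rightarrow> ('a \<Rightarrow> 'w \<Rightarrow> real) \<Rightarrow> real^'m^'w \<Rightarrow> real^'a^'m \<Rightarrow> real" where
  "util P u \<sigma> \<tau> = Inf ((\<lambda>p. util_p u p \<sigma> \<tau>) ` P)"

definition Util :: "(real^'w) set \<Rightarrow> ('a \<Rightarrow> 'w \<Rightarrow> real) \<Rightarrow> (real^'m^'w) set \<Rightarrow> real^'a^'m \<Rightarrow> real" where
  "Util P u S \<tau> = Inf ((\<lambda>\<sigma>. util P u \<sigma> \<tau>) ` S)"

definition BR_amb :: "(real^'w) set \<Rightarrow> ('a \<Rightarrow> 'w \<Rightarrow> real) \<Rightarrow> (real^'m^'w) set \<Rightarrow> (real^'a^'m) set" where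
  "BR_amb P ur S = {\<tau>. strategy \<tau> \<and> (\<forall>\<tau>'. strategy \<tau>' \<longrightarrow> Util P ur S \<tau>' \<le> Util P ur S \<tau>)}"

definition canon :: "real^'m^'w \<Rightarrow> real^'a^'m \<Rightarrow> real^'a^'w" where
  "canon \<sigma> \<tau> = (\<chi> w a. \<Sum>m\<in>UNIV. \<sigma> $ w $ m * \<tau> $ m $ a)"

definition obedient :: "real^'a^'a" where
  "obedient = (\<chi> m a. if a = m then 1 else 0)"

end

theory Submission
  imports Defs
begin

text \<open>Experiments and strategies are row-stochastic matrices, and garbling an experiment
  by a strategy is matrix multiplication. Since expected utility depends on
  \<open>\<sigma>\<close> and \<open>\<tau>\<close> only through the product \<open>\<sigma> ** \<tau>\<close>, associativity gives
  \<open>u(\<sigma> ** \<tau>, \<tau>') = u(\<sigma>, \<tau> ** \<tau>')\<close>. The obedient strategy is the identity matrix, so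
  every deviation \<open>\<tau>'\<close> from obedience against \<open>\<Sigma>*\<close> is the deviation \<open>\<tau> ** \<tau>'\<close>
  against \<open>\<Sigma>\<close>, which cannot improve on \<open>\<tau>\<close>. Closedness of \<open>\<Sigma>*\<close> holds because
  \<open>\<Sigma>\<close> is compact (stochastic matrices are bounded) and \<open>\<sigma> \<mapsto> \<sigma> ** \<tau>\<close> is linear.\<close>

lemma canon_eq_matrix_mult: "canon \<sigma> \<tau> = \<sigma> ** \<tau>"
  unfolding canon_def matrix_matrix_mult_def ..

lemma obedient_eq_mat_1: "obedient = mat 1"
  unfolding obedient_def mat_def by (simp add: eq_commute)

lemma stat_experiment_iff_strategy: "stat_experiment \<sigma> \<longleftrightarrow> strategy \<sigma>"
  unfolding stat_experiment_def strategy_def ..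

lemma strategy_mat_1: "strategy (mat 1 :: real^'a::finite^'a)"
  unfolding strategy_def is_dist_def mat_def by simp

lemma strategy_matrix_mult:
  fixes \<tau> :: "real^'a::finite^'m::finite" and \<tau>' :: "real^'b::finite^'a"
  assumes "strategy \<tau>" and "strategy \<tau>'"
  shows "strategy (\<tau> ** \<tau>')"
  unfolding strategy_def is_dist_def
proof (intro allI conjI)
  fix m b
  show "0 \<le> (\<tau> ** \<tau>') $ m $ b"
    using assms unfolding matrix_matrix_mult_def strategy_def is_dist_def
    by (simp add: sum_nonneg)
next
  fix m
  have "(\<Sum>b\<in>UNIV. (\<tau> ** \<tau>') $ m $ b) = (\<Sum>a\<in>UNIV. \<tau> $ m $ a * (\<Sum>b\<in>UNIV. \<tau>' $ a $ b))"
    unfolding matrix_matrix_mult_def by (simp add: sum_distrib_left, rule sum.swap)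
  also have "\<dots> = 1"
    using assms unfolding strategy_def is_dist_def by simp
  finally show "(\<Sum>b\<in>UNIV. (\<tau> ** \<tau>') $ m $ b) = 1" .
qed

lemma norm_le_1_if_is_dist:
  fixes p :: "real^'n::finite"
  assumes "is_dist p"
  shows "norm p \<le> 1"
proof -
  have "norm p \<le> (\<Sum>i\<in>UNIV. \<bar>p $ i\<bar>)" by (rule norm_le_l1_cart)
  also have "\<dots> = 1" using assms unfolding is_dist_def by simp
  finally show ?thesis .
qed

lemma bounded_strategies: "bounded {\<tau> :: real^'a::finite^'m::finite. strategy \<tau>}"
proof -
  have "norm \<tau> \<le> real CARD('m)" if "strategy \<tau>" for \<tau> :: "real^'a^'m"
  proof -
    have "norm \<tau> \<le> (\<Sum>m\<in>UNIV. norm (\<tau> $ m))"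
      unfolding norm_vec_def by (rule L2_set_le_sum) simp
    also have "\<dots> \<le> (\<Sum>m\<in>(UNIV::'m set). 1)"
      using that norm_le_1_if_is_dist unfolding strategy_def by (intro sum_mono) blast
    finally show ?thesis by simp
  qed
  then show ?thesis unfolding bounded_iff by blast
qed

lemma linear_matrix_mult_right: "linear (\<lambda>\<sigma>. \<sigma> ** (\<tau> :: real^'a::finite^'m::finite))"
  by (rule linearI)
    (simp_all add: matrix_matrix_mult_def vec_eq_iff sum.distrib sum_distrib_left
      distrib_right mult.assoc)

lemma util_p_eq_matrix_mult:
  "util_p u p \<sigma> \<tau> = (\<Sum>w\<in>UNIV. \<Sum>a\<in>UNIV. p $ w * (\<sigma> ** \<tau>) $ w $ a * u a w)"
  unfolding util_p_def matrix_matrix_mult_def vec_lambda_beta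
  by (rule sum.cong[OF refl], subst sum.swap)
    (simp add: sum_distrib_left sum_distrib_right mult.assoc)

lemma util_p_matrix_mult_assoc: "util_p u p (\<sigma> ** \<tau>) \<tau>' = util_p u p \<sigma> (\<tau> ** \<tau>')"
  by (simp add: util_p_eq_matrix_mult matrix_mul_assoc)

lemma util_matrix_mult_assoc: "util P u (\<sigma> ** \<tau>) \<tau>' = util P u \<sigma> (\<tau> ** \<tau>')"
  unfolding util_def by (simp add: util_p_matrix_mult_assoc)

lemma Util_image_matrix_mult:
  "Util P u ((\<lambda>\<sigma>. \<sigma> ** \<tau>) ` S) \<tau>' = Util P u S (\<tau> ** \<tau>')"
  unfolding Util_def image_image by (simp add: util_matrix_mult_assoc)

lemma ambiguous_experiment_image_matrix_mult:
  assumes "ambiguous_experiment S" and "strategy \<tau>"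
  shows "ambiguous_experiment ((\<lambda>\<sigma>. \<sigma> ** \<tau>) ` S)"
proof -
  have S: "S \<noteq> {}" "closed S" "convex S" "\<forall>\<sigma>\<in>S. strategy \<sigma>"
    using assms(1) unfolding ambiguous_experiment_def stat_experiment_iff_strategy by auto
  have "S \<subseteq> {\<sigma>. strategy \<sigma>}" using S(4) by blast
  then have "bounded S" using bounded_strategies bounded_subset by blast
  then have "compact S"
    using S(2) compact_eq_bounded_closed by blast
  then have "compact ((\<lambda>\<sigma>. \<sigma> ** \<tau>) ` S)"
    by (intro compact_continuous_image linear_continuous_on
        linear_matrix_mult_right[THEN linear_conv_bounded_linear[THEN iffD1]])
  moreover have "convex ((\<lambda>\<sigma>. \<sigma> ** \<tau>) ` S)"
    using convex_linear_image[OF linear_matrix_mult_right S(3)] .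
  ultimately show ?thesis
    using S assms(2) strategy_matrix_mult
    unfolding ambiguous_experiment_def stat_experiment_iff_strategy
    by (auto intro: compact_imp_closed)
qed

lemma mat_1_in_BR_amb_image_matrix_mult:
  assumes "\<tau> \<in> BR_amb P ur S"
  shows "mat 1 \<in> BR_amb P ur ((\<lambda>\<sigma>. \<sigma> ** \<tau>) ` S)"
  using assms unfolding BR_amb_def Util_image_matrix_mult
  by (simp add: strategy_mat_1 strategy_matrix_mult)

theorem lemma1:
  fixes P :: "(real^'w::finite) set"
    and us ur :: "'a::finite \<Rightarrow> 'w \<Rightarrow> real"
    and S :: "(real^'m::finite^'w) set"
    and \<tau> :: "real^'a^'m"
  assumes "prior_set P"
    and "ambiguous_experiment S"
    and "\<tau> \<in> BR_amb P ur S"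
  shows "ambiguous_experiment ((\<lambda>\<sigma>. canon \<sigma> \<tau>) ` S)
     \<and> obedient \<in> BR_amb P ur ((\<lambda>\<sigma>. canon \<sigma> \<tau>) ` S)
     \<and> (\<forall>\<sigma>\<in>S. util P us \<sigma> \<tau> = util P us (canon \<sigma> \<tau>) obedient
              \<and> util P ur \<sigma> \<tau> = util P ur (canon \<sigma> \<tau>) obedient)"
proof -
  have "strategy \<tau>" using assms(3) unfolding BR_amb_def by simp
  then show ?thesis
    unfolding canon_eq_matrix_mult obedient_eq_mat_1
    using ambiguous_experiment_image_matrix_mult[OF assms(2)]
      mat_1_in_BR_amb_image_matrix_mult[OF assms(3)]
    by (simp add: util_matrix_mult_assoc)
qed

end
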